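(* Let $T>0$. Let $k,B:[0,T]\to(0,\infty)$ be smooth positive functions of $t$ only, where, writing $y=t-T\in[-T,0]$, $B$ satisfies $B''=k^2B$ with $B=1$ and $B'=0$ at $y=0$ (so that $B'(t)\le 0$ on $[0,T]$), and suppose that $\ln(B^2k)$ is nondecreasing and smooth on $[0,T]$. Consider the system $$\rho_t+m_x=R(\rho,m,t):=-\rho\frac{k'}{k}+\frac{m^2-1}{\rho}BB',\qquad m_t+\Big(\frac{m^2-1}{\rho}\Big)_x=S(\rho,m,t):=-2m\Big(\frac{B'}{B}+\frac{k'}{2k}\Big),$$ with initial data $(\rho,m)(x,0)=(\rho_0,m_0)(x)$, $\rho_0>0$, and let $(\rho^l,m^l)$ be the approximate solutions given by the fractional-step Lax--Friedrichs scheme described in the context. Suppose that for some constants $\delta_0>0$, $P_0>0$ and all $x\in\mathbb{R}$, $$\delta_0\le w(x,0)\le P_0,\quad -P_0\le z(x,0)\le 0\qquad(\text{or } 0\le w(x,0)\le P_0,\quad -P_0\le z(x,0)\le -\delta_0),$$ where $w(x,0)=\frac{m_0(x)+1}{\rho_0(x)}$, $z(x,0)=\frac{m_0(x)-1}{\rho_0(x)}$. Then there exist a constant $h_0>0$ and constants $P(T),A(T)>0$ such that for all time meshes $h\le h_0$ the Riemann invariants $w^l=\frac{m^l+1}{\rho^l}$, $z^l=\frac{m^l-1}{\rho^l}$ of the approximate solutions satisfy, for all $(x,t)\in\mathbb{R}\times[0,T]$, $$\delta_0e^{-A(T)T}\le w^l(x,t)\le P(T),\quad -P(T)\le z^l(x,t)\le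 0$$ (respectively, in the second case, $0\le w^l(x,t)\le P(T)$, $-P(T)\le z^l(x,t)\le -\delta_0e^{-A(T)T}$).
   Context: Notation: $'$ denotes $d/dt$ (equivalently $d/dy$). Write $U=(\rho,m)^\top$, $f(U)=(m,(m^2-1)/\rho)^\top$, $H(U,x,t)=(R,S)^\top$. The homogeneous system $\rho_t+m_x=0$, $m_t+((m^2-1)/\rho)_x=0$ (Chaplygin gas) has eigenvalues $\lambda_1=z=\frac{m-1}{\rho}$, $\lambda_2=w=\frac{m+1}{\rho}$; it is linearly degenerate, and its Riemann problems are solved by contact discontinuities (along which $z$, resp. $w$, is constant). Scheme: let $h>0$ (time mesh) and $l>0$ (space mesh) satisfy the CFL condition $\max_{i=1,2}\lambda_i(\rho^l,m^l)<l/(2h)\le\Lambda$ for a constant $\Lambda>0$. For integers $n\ge0$ and $j$ with $n+j$ even, let $Q_{nj}=\{(x,t):(j-1)l<x<(j+1)l,\ nh\le t<(n+1)h\}$. Set $U^0_j=U_0(jl)$ where $U_0=(\rho_0,m_0)$. Given the values $U^n_j$, in $Q_{nj}$ let $U^l_R$ be the Riemann solution of the homogeneous system with initial data $U^n_{j-1}$ for $x<jl$ and $U^n_{j+1}$ for $x>jl$ at $t=nh$, and define $U^l(x,t)=U^l_R(x,t)+H(U^l_R(x,t),x,t)(t-nh)$; then set $U^{n+1}_j=\frac{1}{2l}\int_{(j-1)l}^{(j+1)l}U^l(x,(n+1)h-0)\,dx$. The resulting piecewise-defined function $U^l=(\rho^l,m^l)$ on $\mathbb{R}\times[0,T]$ is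 the approximate solution. *)

theory Defs
  imports "HOL-Analysis.Analysis"
begin

definition smooth_fun :: "(real \<Rightarrow> real) \<Rightarrow> bool" where
  "smooth_fun f \<longleftrightarrow> (\<forall>n x. ((deriv ^^ n) f) differentiable (at x))"

definition w_of :: "real \<times> real \<Rightarrow> real" where
  "w_of U = (snd U + 1) / fst U"

definition z_of :: "real \<times> real \<Rightarrow> real" where
  "z_of U = (snd U - 1) / fst U"

text \<open>Riemann solution of the homogeneous Chaplygin gas system with left state UL
  and right state UR, centred at the origin, at relative position xi and relative time tau.
  It consists of a 1-contact of speed z(UL) (across which z is constant) and a 2-contact of
  speed w(UR) (across which w is constant); the middle state has w = w(UR), z = z(UL).\<close>
definition chap_riemann :: "real \<times> real \<Rightarrow> real \<times> real \<Rightarrow> real \<Rightarrow> real \<Rightarrow> real \<times> real" where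
  "chap_riemann UL UR xi tau =
     (let zL = z_of UL; wR = w_of UR;
          UM = (2 / (wR - zL), (wR + zL) / (wR - zL))
      in if xi < zL * tau then UL else if xi < wR * tau then UM else UR)"

definition src_H :: "(real \<Rightarrow> real) \<Rightarrow> (real \<Rightarrow> real) \<Rightarrow> real \<times> real \<Rightarrow> real \<Rightarrow> real \<times> real" where
  "src_H k B U t =
     (let rho = fst U; m = snd U in
      (- rho * deriv k t / k t + (m\<^sup>2 - 1) / rho * B t * deriv B t,
       - 2 * m * (deriv B t / B t + deriv k t / (2 * k t))))"

text \<open>The approximate solution on the time strip n h \<le> t < (n+1) h, given the grid
  values G at level n: in the cell Q_{nj} (n+j even, (j-1)l < x < (j+1)l) it is
  U_R + H(U_R,x,t)(t - n h), U_R the Riemann solution with data G(j-1), G(j+1).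
  Cell boundary points x = (j-1) l are assigned to cell j.\<close>
definition lf_level :: "(real \<Rightarrow> real) \<Rightarrow> (real \<Rightarrow> real) \<Rightarrow> real \<Rightarrow> real \<Rightarrow>
    (int \<Rightarrow> real \<times> real) \<Rightarrow> nat \<Rightarrow> real \<Rightarrow> real \<Rightarrow> real \<times> real" where
  "lf_level k B h l G n x t =
     (let kk = \<lfloor>x / l\<rfloor>;
          j = (if even (int n + kk) then kk else kk + 1);
          UR = chap_riemann (G (j - 1)) (G (j + 1)) (x - real_of_int j * l) (t - real n * h)
      in UR + (t - real n * h) *\<^sub>R src_H k B UR t)"

text \<open>Grid values U^n_j (only those with n+j even are used).\<close>
primrec lf_grid :: "(real \<Rightarrow> real) \<Rightarrow> (real \<Rightarrow> real) \<Rightarrow> real \<Rightarrow> real \<Rightarrow>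
    (real \<Rightarrow> real \<times> real) \<Rightarrow> nat \<Rightarrow> int \<Rightarrow> real \<times> real" where
  "lf_grid k B h l U0 0 = (\<lambda>j. U0 (real_of_int j * l))"
| "lf_grid k B h l U0 (Suc n) =
     (\<lambda>j. (1 / (2 * l)) *\<^sub>R
        integral {(real_of_int j - 1) * l .. (real_of_int j + 1) * l}
          (\<lambda>x. lf_level k B h l (lf_grid k B h l U0 n) n x (real (Suc n) * h)))"

definition lf_approx :: "(real \<Rightarrow> real) \<Rightarrow> (real \<Rightarrow> real) \<Rightarrow> real \<Rightarrow> real \<Rightarrow>
    (real \<Rightarrow> real \<times> real) \<Rightarrow> real \<Rightarrow> real \<Rightarrow> real \<times> real" where
  "lf_approx k B h l U0 x t =
     (let n = nat \<lfloor>t / h\<rfloor> in lf_level k B h l (lf_grid k B h l U0 n) n x t)"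

end

theory Submission
  imports Defs
begin

text \<open>In the Riemann invariants w = (m + 1)/\<rho>, z = (m - 1)/\<rho>, every set
  {a \<le> w \<le> p, -p \<le> z \<le> -b} with a + b > 0 is invariant for the homogeneous Chaplygin gas,
  because the middle state of a Riemann solution takes its w from the right state and its z from the
  left one. In the conservative variables (\<rho>, m) such a set is an intersection of half-planes, so
  the cell averages of the Lax--Friedrichs scheme preserve it as well.

  A source step of length s gives w' = (w (1 - s g) + s g (-z)) / D and
  -z' = ((-z) (1 - s g) + s g w) / D, where g = B'/B + k'/(2k) = (ln (B^2 k))'/2 and
  D = 1 - s k'/k + s w z B B'. As g \<ge> 0 and B B' \<le> 0, the numerators are convex combinations
  of w and -z, and if K bounds |k'/k|, 2 g and |B B'| then D lies between 1 - s K and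
  1 + s K (1 + p^2). So one step multiplies the lower margins a, b at worst by e^(-K (2 + p^2) s)
  and the upper bound p by e^(2 K s). Iterating over the time levels gives the estimate. The exact Riemann solution is used on every whole cell.\<close>

definition chaplygin_region :: "real \<Rightarrow> real \<Rightarrow> real \<Rightarrow> real \<times> real \<Rightarrow> bool" where
  "chaplygin_region a b p U \<longleftrightarrow>
     fst U > 0 \<and> a \<le> w_of U \<and> w_of U \<le> p \<and> - p \<le> z_of U \<and> z_of U \<le> - b"

lemma chaplygin_region_riemann:
  assumes "chaplygin_region a b p UL" "chaplygin_region a b p UR" "0 < a + b"
  shows "chaplygin_region a b p (chap_riemann UL UR xi tau)"
proof -
  define zL wR where "zL = z_of UL" and "wR = w_of UR"
  have gap: "wR - zL > 0"
    using assms unfolding chaplygin_region_def zL_def wR_def by linarith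
  have "w_of (2 / (wR - zL), (wR + zL) / (wR - zL)) = wR"
    and "z_of (2 / (wR - zL), (wR + zL) / (wR - zL)) = zL"
    using gap by (simp_all add: w_of_def z_of_def field_simps)
  with assms gap have "chaplygin_region a b p (2 / (wR - zL), (wR + zL) / (wR - zL))"
    unfolding chaplygin_region_def zL_def wR_def by auto
  then show ?thesis
    using assms unfolding chap_riemann_def Let_def zL_def[symmetric] wR_def[symmetric] by auto
qed

lemma chaplygin_region_iff_half_planes:
  assumes "fst U > 0"
  shows "chaplygin_region a b p U \<longleftrightarrow>
    a * fst U + (-1) * snd U \<le> 1 \<and> (-p) * fst U + 1 * snd U \<le> -1 \<and>
    (-p) * fst U + (-1) * snd U \<le> -1 \<and> b * fst U + 1 * snd U \<le> 1"
  using assms unfolding chaplygin_region_def w_of_def z_of_def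
  by (simp add: le_divide_eq divide_le_eq algebra_simps)

lemma average_linear_le:
  fixes f :: "real \<Rightarrow> real \<times> real"
  assumes f: "f integrable_on {c..d}" and "c < d"
    and le: "\<And>x. x \<in> {c..d} \<Longrightarrow> \<alpha> * fst (f x) + \<beta> * snd (f x) \<le> \<gamma>"
  defines "V \<equiv> (1 / (d - c)) *\<^sub>R integral {c..d} f"
  shows "\<alpha> * fst V + \<beta> * snd V \<le> \<gamma>"
proof -
  let ?L = "\<lambda>U::real \<times> real. \<alpha> * fst U + \<beta> * snd U"
  have "bounded_linear ?L"
    by (intro bounded_linear_add bounded_linear_mult_right
        bounded_linear_compose[OF bounded_linear_mult_right] bounded_linear_fst bounded_linear_snd)
  then have "((?L \<circ> f) has_integral ?L (integral {c..d} f)) {c..d}"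
    using has_integral_linear integrable_integral[OF f] by blast
  moreover have "((\<lambda>x. \<gamma>) has_integral ((d - c) * \<gamma>)) {c..d}"
    using has_integral_const_real[of \<gamma> c d] \<open>c < d\<close> by simp
  ultimately have "?L (integral {c..d} f) \<le> (d - c) * \<gamma>"
    by (rule has_integral_le) (use le in auto)
  moreover have "\<alpha> * fst V + \<beta> * snd V = ?L (integral {c..d} f) / (d - c)"
    unfolding V_def by (simp add: add_divide_distrib)
  ultimately show ?thesis
    using \<open>c < d\<close> by (simp add: pos_divide_le_eq mult.commute)
qed

lemma chaplygin_region_average:
  fixes f :: "real \<Rightarrow> real \<times> real"
  assumes f: "f integrable_on {c..d}" and cd: "c < d"
    and region: "\<And>x. x \<in> {c..d} \<Longrightarrow> chaplygin_region a b p (f x)"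
  shows "chaplygin_region a b p ((1 / (d - c)) *\<^sub>R integral {c..d} f)"
    (is "chaplygin_region a b p ?V")
proof -
  have pos: "\<And>x. x \<in> {c..d} \<Longrightarrow> fst (f x) > 0"
    using region by (simp add: chaplygin_region_def)
  have half_planes: "\<And>x. x \<in> {c..d} \<Longrightarrow>
      a * fst (f x) + (-1) * snd (f x) \<le> 1 \<and> (-p) * fst (f x) + 1 * snd (f x) \<le> -1 \<and>
      (-p) * fst (f x) + (-1) * snd (f x) \<le> -1 \<and> b * fst (f x) + 1 * snd (f x) \<le> 1"
    using region pos chaplygin_region_iff_half_planes by blast
  note average = average_linear_le[OF f cd]
  have "a * fst ?V + (-1) * snd ?V \<le> 1" by (rule average) (use half_planes in blast)
  moreover have p1: "(-p) * fst ?V + 1 * snd ?V \<le> -1" by (rule average) (use half_planes in blast)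
  moreover have p2: "(-p) * fst ?V + (-1) * snd ?V \<le> -1" by (rule average) (use half_planes in blast)
  moreover have "b * fst ?V + 1 * snd ?V \<le> 1" by (rule average) (use half_planes in blast)
  moreover have "fst ?V > 0"
  proof -
    have "(-1) * fst ?V + 0 * snd ?V \<le> 0"
      by (rule average) (use pos in \<open>auto simp: less_imp_le\<close>)
    moreover from p1 p2 have "1 \<le> p * fst ?V"
      by linarith
    then have "fst ?V \<noteq> 0"
      by auto
    ultimately show ?thesis
      by linarith
  qed
  ultimately show ?thesis
    using chaplygin_region_iff_half_planes by blast
qed

lemma integrable_on_three_step:
  fixes U1 U2 U3 :: "real \<times> real" and c d :: real
  shows "(\<lambda>x. if x < \<xi>1 then U1 else if x < \<xi>2 then U2 else U3) integrable_on {c..d}"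
proof -
  let ?step = "\<lambda>\<xi> (x::real). if x < \<xi> then 0 else 1::real"
  have step_integrable: "?step \<xi> integrable_on {c..d}" for \<xi>
    by (rule integrable_on_mono_on, rule mono_onI) (auto simp: not_less)
  have "(\<lambda>x. if x < \<xi>1 then U1 else if x < \<xi>2 then U2 else U3) =
        (\<lambda>x. (U1 + ?step \<xi>1 x *\<^sub>R (U2 - U1)) + ?step (max \<xi>1 \<xi>2) x *\<^sub>R (U3 - U2))"
    by (rule ext) (auto simp: max_def)
  then show ?thesis
    by (simp only:) (intro integrable_add integrable_const_ivl integrable_on_scaleR_left step_integrable)
qed

lemma lf_level_integrable_on_cell:
  assumes "l > 0"
  shows "(\<lambda>x. lf_level k B h l G n x t) integrable_on {of_int i * l .. (of_int i + 1) * l}"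
proof -
  define j where "j = (if even (int n + i) then i else i + 1)"
  define UL UR where "UL = G (j - 1)" and "UR = G (j + 1)"
  define \<tau> where "\<tau> = t - real n * h"
  define UM where "UM = (2 / (w_of UR - z_of UL), (w_of UR + z_of UL) / (w_of UR - z_of UL))"
  define \<Psi> where "\<Psi> = (\<lambda>U. U + \<tau> *\<^sub>R src_H k B U t)"
  define g where "g = (\<lambda>x. if x < of_int j * l + z_of UL * \<tau> then \<Psi> UL
                   else if x < of_int j * l + w_of UR * \<tau> then \<Psi> UM else \<Psi> UR)"
  have "lf_level k B h l G n x t = g x"
    if x: "x \<in> {of_int i * l .. (of_int i + 1) * l} - {(of_int i + 1) * l}" for x
  proof -
    from x \<open>l > 0\<close> have floor: "\<lfloor>x / l\<rfloor> = i"
      by (simp add: floor_eq_iff field_simps)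
    show ?thesis
      unfolding lf_level_def Let_def floor j_def[symmetric] UL_def[symmetric] UR_def[symmetric]
        \<tau>_def[symmetric] g_def \<Psi>_def chap_riemann_def UM_def
      by (auto simp: algebra_simps)
  qed
  moreover have g_integrable: "g integrable_on {of_int i * l .. (of_int i + 1) * l}"
    unfolding g_def by (rule integrable_on_three_step)
  ultimately show ?thesis
    by (intro integrable_spike_finite[of "{(of_int i + 1) * l}", OF _ _ g_integrable]) auto
qed

lemma lf_level_integrable:
  assumes "l > 0"
  shows "(\<lambda>x. lf_level k B h l G n x t) integrable_on {(of_int j - 1) * l .. (of_int j + 1) * l}"
proof (rule Henstock_Kurzweil_Integration.integrable_combine[where c = "of_int j * l"])
  show "(of_int j - 1) * l \<le> of_int j * l" "of_int j * l \<le> (of_int j + 1) * l"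
    using \<open>l > 0\<close> by (auto simp: algebra_simps)
  show "(\<lambda>x. lf_level k B h l G n x t) integrable_on {(of_int j - 1) * l .. of_int j * l}"
    using lf_level_integrable_on_cell[OF \<open>l > 0\<close>, of k B h G n t "j - 1"] by simp
  show "(\<lambda>x. lf_level k B h l G n x t) integrable_on {of_int j * l .. (of_int j + 1) * l}"
    using lf_level_integrable_on_cell[OF \<open>l > 0\<close>] .
qed

lemma exp_minus_le_quotient:
  fixes e y :: real
  assumes "0 \<le> e" "e \<le> 1" "0 \<le> y"
  shows "exp (- (e + y)) \<le> (1 - e / 2) / (1 + y)"
proof -
  have "1 / (1 - e / 2) \<le> 1 + e"
  proof -
    have "0 \<le> e * (1 - e)" using assms by simp
    then show ?thesis using assms by (simp add: field_simps)
  qed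
  also have "\<dots> \<le> exp e" by (rule exp_ge_add_one_self)
  finally have "exp (- e) \<le> 1 - e / 2"
    using assms by (simp add: exp_minus field_simps)
  moreover have "exp (- y) \<le> 1 / (1 + y)"
    using exp_ge_add_one_self[of y] assms by (simp add: exp_minus field_simps)
  ultimately have "exp (- e) * exp (- y) \<le> (1 - e / 2) * (1 / (1 + y))"
    using assms by (intro mult_mono) auto
  then show ?thesis by (simp add: exp_add[symmetric])
qed

lemma inverse_one_minus_le_exp:
  fixes e :: real
  assumes "0 \<le> e" "e \<le> 1 / 2"
  shows "1 / (1 - e) \<le> exp (2 * e)"
proof -
  have "0 \<le> e * (1 - 2 * e)" using assms by simp
  then have "1 / (1 - e) \<le> 1 + 2 * e" using assms by (simp add: field_simps)
  also have "\<dots> \<le> exp (2 * e)" by (rule exp_ge_add_one_self)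
  finally show ?thesis .
qed

lemma source_quotient_bounds:
  fixes u v \<sigma> D a p e y :: real
  assumes "0 \<le> a" "a \<le> u" "u \<le> p" "0 \<le> v" "v \<le> p"
    and "0 \<le> \<sigma>" "2 * \<sigma> \<le> e" "e \<le> 1 / 2"
    and "0 \<le> y" "1 - e \<le> D" "D \<le> 1 + y"
  shows "a * exp (- (e + y)) \<le> (u * (1 - \<sigma>) + \<sigma> * v) / D"
    and "(u * (1 - \<sigma>) + \<sigma> * v) / D \<le> p * exp (2 * e)"
proof -
  have "0 \<le> e" "0 < D" using assms by linarith+
  have "a * exp (- (e + y)) \<le> a * ((1 - e / 2) / (1 + y))"
    using exp_minus_le_quotient[of e y] assms \<open>0 \<le> e\<close> by (intro mult_left_mono) auto
  also have "\<dots> \<le> a * (1 - e / 2) / D"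
    using assms \<open>0 < D\<close> by (simp add: frac_le)
  also have "\<dots> \<le> (u * (1 - \<sigma>) + \<sigma> * v) / D"
  proof (rule divide_right_mono)
    have "a * (1 - e / 2) \<le> u * (1 - \<sigma>)"
      using assms by (intro mult_mono) auto
    then show "a * (1 - e / 2) \<le> u * (1 - \<sigma>) + \<sigma> * v"
      using assms by (simp add: add_increasing2)
  qed (use \<open>0 < D\<close> in simp)
  finally show "a * exp (- (e + y)) \<le> (u * (1 - \<sigma>) + \<sigma> * v) / D" .
  have "u * (1 - \<sigma>) + \<sigma> * v \<le> p * (1 - \<sigma>) + \<sigma> * p"
    using assms by (intro add_mono mult_mono) auto
  then have "(u * (1 - \<sigma>) + \<sigma> * v) / D \<le> p / D"
    using \<open>0 < D\<close> by (simp add: divide_right_mono algebra_simps)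
  also have "\<dots> \<le> p * (1 / (1 - e))"
    using assms \<open>0 < D\<close> by (simp add: frac_le)
  also have "\<dots> \<le> p * exp (2 * e)"
    using inverse_one_minus_le_exp[of e] assms \<open>0 \<le> e\<close> by (intro mult_left_mono) auto
  finally show "(u * (1 - \<sigma>) + \<sigma> * v) / D \<le> p * exp (2 * e)" .
qed

lemma source_step_riemann_invariants:
  fixes k B :: "real \<Rightarrow> real" and U :: "real \<times> real" and s t :: real
  assumes "fst U > 0"
  defines "g \<equiv> deriv B t / B t + deriv k t / (2 * k t)"
    and "D \<equiv> 1 - s * (deriv k t / k t) + s * (w_of U * z_of U * (B t * deriv B t))"
  shows "fst (U + s *\<^sub>R src_H k B U t) = fst U * D"
    and "w_of (U + s *\<^sub>R src_H k B U t) = (w_of U * (1 - s * g) + s * g * (- z_of U)) / D"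
    and "- z_of (U + s *\<^sub>R src_H k B U t) = ((- z_of U) * (1 - s * g) + s * g * w_of U) / D"
proof -
  obtain \<rho> m where U: "U = (\<rho>, m)" by (cases U)
  with assms have "\<rho> > 0" by simp
  have sq: "(m\<^sup>2 - 1) / \<rho> = w_of U * z_of U * \<rho>"
    using \<open>\<rho> > 0\<close> unfolding U w_of_def z_of_def by (simp add: field_simps power2_eq_square)
  have "U + s *\<^sub>R src_H k B U t =
      (\<rho> + s * (- \<rho> * (deriv k t / k t) + (m\<^sup>2 - 1) / \<rho> * B t * deriv B t), m + s * (- 2 * m * g))"
    unfolding U src_H_def g_def by simp
  also have "\<dots> = (\<rho> * D, m - 2 * s * g * m)"
    unfolding sq D_def by (simp add: algebra_simps)
  finally have step: "U + s *\<^sub>R src_H k B U t = (\<rho> * D, m - 2 * s * g * m)" .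
  show "fst (U + s *\<^sub>R src_H k B U t) = fst U * D"
    unfolding step by (simp add: U)
  have "w_of U * (1 - s * g) + s * g * (- z_of U) = (m - 2 * s * g * m + 1) / \<rho>"
    and "(- z_of U) * (1 - s * g) + s * g * w_of U = - (m - 2 * s * g * m - 1) / \<rho>"
    using \<open>\<rho> > 0\<close> by (simp_all add: U w_of_def z_of_def field_simps)
  then show "w_of (U + s *\<^sub>R src_H k B U t) = (w_of U * (1 - s * g) + s * g * (- z_of U)) / D"
    and "- z_of (U + s *\<^sub>R src_H k B U t) = ((- z_of U) * (1 - s * g) + s * g * w_of U) / D"
    unfolding step by (simp_all add: w_of_def z_of_def divide_divide_eq_left mult.commute minus_divide_left)
qed

definition source_coeff_bounded :: "real \<Rightarrow> (real \<Rightarrow> real) \<Rightarrow> (real \<Rightarrow> real) \<Rightarrow> real \<Rightarrow> bool" where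
  "source_coeff_bounded K k B t \<longleftrightarrow>
     \<bar>deriv k t / k t\<bar> \<le> K \<and>
     0 \<le> deriv B t / B t + deriv k t / (2 * k t) \<and> 2 * (deriv B t / B t + deriv k t / (2 * k t)) \<le> K \<and>
     B t * deriv B t \<le> 0 \<and> \<bar>B t * deriv B t\<bar> \<le> K"

lemma chaplygin_region_source_step:
  assumes U: "chaplygin_region a b p U" and "0 \<le> a" "0 \<le> b"
    and coeff: "source_coeff_bounded K k B t"
    and "0 \<le> s" "s * K \<le> 1 / 2" "p \<le> P"
  shows "chaplygin_region (a * exp (- (K * (2 + P\<^sup>2) * s))) (b * exp (- (K * (2 + P\<^sup>2) * s)))
           (p * exp (2 * K * s)) (U + s *\<^sub>R src_H k B U t)"
proof -
  define \<kappa> g \<beta> where "\<kappa> = deriv k t / k t" and "g = deriv B t / B t + deriv k t / (2 * k t)"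
    and "\<beta> = B t * deriv B t"
  define w z where "w = w_of U" and "z = z_of U"
  define D where "D = 1 - s * \<kappa> + s * (w * z * \<beta>)"
  from U have "fst U > 0" and wz: "a \<le> w" "w \<le> p" "- p \<le> z" "z \<le> - b"
    unfolding chaplygin_region_def w_def z_def by auto
  from coeff have "\<bar>\<kappa>\<bar> \<le> K" "0 \<le> g" "2 * g \<le> K" "\<beta> \<le> 0" "\<bar>\<beta>\<bar> \<le> K"
    unfolding source_coeff_bounded_def \<kappa>_def g_def \<beta>_def by auto
  have "0 \<le> w * (- z) * (- \<beta>)"
    using wz \<open>0 \<le> a\<close> \<open>0 \<le> b\<close> \<open>\<beta> \<le> 0\<close> by (intro mult_nonneg_nonneg) auto
  moreover have "w * (- z) * (- \<beta>) \<le> P\<^sup>2 * K"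
    using wz \<open>0 \<le> a\<close> \<open>0 \<le> b\<close> \<open>\<beta> \<le> 0\<close> \<open>\<bar>\<beta>\<bar> \<le> K\<close> \<open>p \<le> P\<close>
    unfolding power2_eq_square by (intro mult_mono) auto
  ultimately have "0 \<le> s * (w * z * \<beta>)" "s * (w * z * \<beta>) \<le> s * (P\<^sup>2 * K)"
    using \<open>0 \<le> s\<close> by (simp_all add: mult_left_mono)
  moreover have "\<bar>s * \<kappa>\<bar> \<le> s * K"
    using \<open>0 \<le> s\<close> \<open>\<bar>\<kappa>\<bar> \<le> K\<close> by (simp add: abs_mult mult_left_mono)
  ultimately have D: "1 - s * K \<le> D" "D \<le> 1 + s * (K + P\<^sup>2 * K)"
    unfolding D_def by (auto simp: abs_le_iff algebra_simps)
  have \<sigma>: "0 \<le> s * g" "2 * (s * g) \<le> s * K"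
    using \<open>0 \<le> s\<close> \<open>0 \<le> g\<close> mult_left_mono[OF \<open>2 * g \<le> K\<close> \<open>0 \<le> s\<close>] by simp_all
  have y: "0 \<le> s * (K + P\<^sup>2 * K)"
    using \<open>0 \<le> s\<close> \<open>\<bar>\<kappa>\<bar> \<le> K\<close> by simp
  note quotient = source_quotient_bounds[OF _ _ _ _ _ \<sigma> \<open>s * K \<le> 1 / 2\<close> y D]
  have V: "fst (U + s *\<^sub>R src_H k B U t) = fst U * D"
    "w_of (U + s *\<^sub>R src_H k B U t) = (w * (1 - s * g) + s * g * (- z)) / D"
    "- z_of (U + s *\<^sub>R src_H k B U t) = ((- z) * (1 - s * g) + s * g * w) / D"
    unfolding D_def w_def z_def g_def \<kappa>_def \<beta>_def
    by (fact source_step_riemann_invariants[OF \<open>fst U > 0\<close>])+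
  have "fst U * D > 0"
    using \<open>fst U > 0\<close> D(1) \<open>s * K \<le> 1 / 2\<close> by simp
  moreover have "exp (- (K * (2 + P\<^sup>2) * s)) = exp (- (s * K + s * (K + P\<^sup>2 * K)))"
    and "exp (2 * K * s) = exp (2 * (s * K))"
    by (simp_all add: algebra_simps)
  moreover have "z_of (U + s *\<^sub>R src_H k B U t) = - (((- z) * (1 - s * g) + s * g * w) / D)"
    using V(3) by simp
  ultimately show ?thesis
    unfolding chaplygin_region_def V(1,2)
    using quotient[of a w p "- z"] quotient[of b "- z" p w] wz \<open>0 \<le> a\<close> \<open>0 \<le> b\<close>
    by (simp only:) auto
qed

lemma smooth_fun_deriv: "smooth_fun f \<Longrightarrow> smooth_fun (deriv f)"
  unfolding smooth_fun_def by (metis funpow_Suc_right comp_apply)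

lemma smooth_fun_has_real_derivative:
  "smooth_fun f \<Longrightarrow> (f has_real_derivative deriv f x) (at x)"
  unfolding smooth_fun_def by (metis DERIV_deriv_iff_real_differentiable funpow_0)

lemma smooth_fun_continuous_on: "smooth_fun f \<Longrightarrow> continuous_on S f"
  by (meson DERIV_isCont continuous_at_imp_continuous_on smooth_fun_has_real_derivative)

lemma deriv_nonpos_before_critical_point:
  fixes B :: "real \<Rightarrow> real"
  assumes "smooth_fun B" and convex: "\<And>t. t \<in> {0..T} \<Longrightarrow> deriv (deriv B) t \<ge> 0"
    and "deriv B T = 0" and "t \<in> {0..T}"
  shows "deriv B t \<le> 0"
proof -
  have "deriv B t \<le> deriv B T"
  proof (rule DERIV_nonneg_imp_nondecreasing[of t T "deriv B"])
    fix x assume "t \<le> x" "x \<le> T"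
    with \<open>t \<in> {0..T}\<close> show "\<exists>y. (deriv B has_real_derivative y) (at x) \<and> y \<ge> 0"
      using smooth_fun_has_real_derivative[OF smooth_fun_deriv[OF \<open>smooth_fun B\<close>]] convex
      by fastforce
  qed (use \<open>t \<in> {0..T}\<close> in simp)
  with \<open>deriv B T = 0\<close> show ?thesis by simp
qed

lemma log_derivative_nonneg:
  fixes k B :: "real \<Rightarrow> real"
  assumes "T > 0" and "smooth_fun k" "smooth_fun B"
    and pos: "\<And>t. t \<in> {0..T} \<Longrightarrow> k t > 0 \<and> B t > 0"
    and mono: "mono_on {0..T} (\<lambda>t. ln ((B t)\<^sup>2 * k t))"
    and "t \<in> {0..T}"
  shows "0 \<le> deriv B t / B t + deriv k t / (2 * k t)"
proof -
  define q where "q t = deriv B t / B t + deriv k t / (2 * k t)" for t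
  have "q t \<ge> 0" if "t \<in> {0<..<T}" for t
  proof -
    from that pos have "k t > 0" "B t > 0" by auto
    with smooth_fun_has_real_derivative[OF \<open>smooth_fun k\<close>]
      smooth_fun_has_real_derivative[OF \<open>smooth_fun B\<close>]
    have "((\<lambda>t. ln ((B t)\<^sup>2 * k t)) has_real_derivative 2 * q t) (at t)"
      unfolding q_def by (auto intro!: derivative_eq_intros simp: field_simps power2_eq_square)
    with mono that show ?thesis
      using mono_on_imp_deriv_nonneg by fastforce
  qed
  moreover have "continuous_on {0..T} q"
    unfolding q_def using smooth_fun_continuous_on smooth_fun_deriv \<open>smooth_fun k\<close> \<open>smooth_fun B\<close>
    by (intro continuous_intros) (auto dest: pos)
  ultimately show ?thesis
    using continuous_ge_on_closure[of "{0<..<T}" q t 0] \<open>T > 0\<close> \<open>t \<in> {0..T}\<close>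
    unfolding q_def by simp
qed

lemma source_coeff_bounded_exists:
  fixes k B :: "real \<Rightarrow> real"
  assumes "T > 0" and "smooth_fun k" "smooth_fun B"
    and pos: "\<forall>t\<in>{0..T}. k t > 0 \<and> B t > 0"
    and ode: "\<forall>t\<in>{0..T}. deriv (deriv B) t = (k t)\<^sup>2 * B t"
    and "deriv B T = 0"
    and mono: "mono_on {0..T} (\<lambda>t. ln ((B t)\<^sup>2 * k t))"
  obtains K where "K > 0" "\<And>t. t \<in> {0..T} \<Longrightarrow> source_coeff_bounded K k B t"
proof -
  have "continuous_on {0..T} (\<lambda>t. deriv k t / k t)"
    and "continuous_on {0..T} (\<lambda>t. deriv B t / B t + deriv k t / (2 * k t))"
    and "continuous_on {0..T} (\<lambda>t. B t * deriv B t)"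
    using smooth_fun_continuous_on smooth_fun_deriv \<open>smooth_fun k\<close> \<open>smooth_fun B\<close>
    by (intro continuous_intros; use pos in auto)+
  note bound = continuous_on_compact_bound[OF compact_Icc]
  obtain K1 where K1: "\<And>t. t \<in> {0..T} \<Longrightarrow> norm (deriv k t / k t) \<le> K1"
    using bound[OF \<open>continuous_on {0..T} (\<lambda>t. deriv k t / k t)\<close>] by blast
  obtain K2 where K2: "\<And>t. t \<in> {0..T} \<Longrightarrow> norm (deriv B t / B t + deriv k t / (2 * k t)) \<le> K2"
    using bound[OF \<open>continuous_on {0..T} (\<lambda>t. deriv B t / B t + deriv k t / (2 * k t))\<close>] by blast
  obtain K3 where K3: "\<And>t. t \<in> {0..T} \<Longrightarrow> norm (B t * deriv B t) \<le> K3"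
    using bound[OF \<open>continuous_on {0..T} (\<lambda>t. B t * deriv B t)\<close>] by blast
  show ?thesis
  proof
    show "1 + \<bar>K1\<bar> + 2 * \<bar>K2\<bar> + \<bar>K3\<bar> > 0" by simp
    fix t assume t: "t \<in> {0..T}"
    have "deriv B t \<le> 0"
    proof (rule deriv_nonpos_before_critical_point[OF \<open>smooth_fun B\<close> _ \<open>deriv B T = 0\<close> t])
      show "deriv (deriv B) s \<ge> 0" if "s \<in> {0..T}" for s
        using ode pos that by (simp add: less_imp_le)
    qed
    moreover have "0 \<le> deriv B t / B t + deriv k t / (2 * k t)"
      using log_derivative_nonneg[OF \<open>T > 0\<close> \<open>smooth_fun k\<close> \<open>smooth_fun B\<close> _ mono t] pos by blast
    ultimately show "source_coeff_bounded (1 + \<bar>K1\<bar> + 2 * \<bar>K2\<bar> + \<bar>K3\<bar>) k B t"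
      unfolding source_coeff_bounded_def using K1 K2 K3 t pos
      by (force simp: mult_nonneg_nonpos less_imp_le)
  qed
qed

lemma lf_level_region:
  fixes G :: "int \<Rightarrow> real \<times> real"
  assumes G: "\<And>j. chaplygin_region (a * exp (- A * \<tau>)) (b * exp (- A * \<tau>)) (p * exp (2 * K * \<tau>)) (G j)"
    and \<tau>: "\<tau> = real n * h" "\<tau> \<le> t" "(t - \<tau>) * K \<le> 1 / 2"
    and "0 \<le> a" "0 \<le> b" "0 < a + b"
    and "source_coeff_bounded K k B t" and "p * exp (2 * K * \<tau>) \<le> P" and A: "A = K * (2 + P\<^sup>2)"
  shows "chaplygin_region (a * exp (- A * t)) (b * exp (- A * t)) (p * exp (2 * K * t))
           (lf_level k B h l G n x t)"
proof -
  have "0 < (a + b) * exp (- A * \<tau>)"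
    using \<open>0 < a + b\<close> by simp
  then have "chaplygin_region (a * exp (- A * \<tau>)) (b * exp (- A * \<tau>)) (p * exp (2 * K * \<tau>))
      (chap_riemann (G i) (G j) \<xi> (t - \<tau>))" for i j \<xi>
    using G by (intro chaplygin_region_riemann) (auto simp: distrib_right)
  then have "chaplygin_region (a * exp (- A * \<tau>) * exp (- (K * (2 + P\<^sup>2) * (t - \<tau>))))
      (b * exp (- A * \<tau>) * exp (- (K * (2 + P\<^sup>2) * (t - \<tau>))))
      (p * exp (2 * K * \<tau>) * exp (2 * K * (t - \<tau>))) (lf_level k B h l G n x t)"
    unfolding lf_level_def Let_def \<tau>(1)[symmetric]
    using assms by (intro chaplygin_region_source_step) auto
  moreover have "exp (- A * \<tau>) * exp (- (K * (2 + P\<^sup>2) * (t - \<tau>))) = exp (- A * t)"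
    and "exp (2 * K * \<tau>) * exp (2 * K * (t - \<tau>)) = exp (2 * K * t)"
    unfolding A exp_add[symmetric] by (simp_all add: algebra_simps)
  ultimately show ?thesis
    by (simp only: mult.assoc)
qed

lemma lf_grid_region:
  assumes U\<^sub>0: "\<And>x. chaplygin_region a b p (U\<^sub>0 x)" and "0 \<le> a" "0 \<le> b" "0 < a + b"
    and coeff: "\<And>t. t \<in> {0..T} \<Longrightarrow> source_coeff_bounded K k B t"
    and "0 < h" "h * K \<le> 1 / 2" "0 < l" "0 \<le> K" "0 \<le> p"
    and P: "p * exp (2 * K * T) \<le> P" and A: "A = K * (2 + P\<^sup>2)"
    and "real n * h \<le> T"
  shows "chaplygin_region (a * exp (- A * (real n * h))) (b * exp (- A * (real n * h)))
           (p * exp (2 * K * (real n * h))) (lf_grid k B h l U\<^sub>0 n j)"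
  using \<open>real n * h \<le> T\<close>
proof (induction n arbitrary: j)
  case 0
  with U\<^sub>0 show ?case by simp
next
  case (Suc n)
  define t where "t = real (Suc n) * h"
  have "real n * h \<le> T" "t \<in> {0..T}"
    using Suc.prems \<open>0 < h\<close> unfolding t_def by (auto simp: algebra_simps)
  moreover have "p * exp (2 * K * (real n * h)) \<le> P"
    using \<open>real n * h \<le> T\<close> P \<open>0 \<le> K\<close> \<open>0 \<le> p\<close> by (smt (verit) exp_le_cancel_iff mult_left_mono)
  moreover have "(t - real n * h) * K \<le> 1 / 2"
    using \<open>h * K \<le> 1 / 2\<close> unfolding t_def by (simp add: algebra_simps)
  ultimately have "chaplygin_region (a * exp (- A * t)) (b * exp (- A * t)) (p * exp (2 * K * t))
      (lf_level k B h l (lf_grid k B h l U\<^sub>0 n) n x t)" for x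
    using Suc.IH assms \<open>0 < h\<close> unfolding t_def
    by (intro lf_level_region[OF _ refl]) auto
  then have "chaplygin_region (a * exp (- A * t)) (b * exp (- A * t)) (p * exp (2 * K * t))
      ((1 / ((of_int j + 1) * l - (of_int j - 1) * l)) *\<^sub>R
        integral {(of_int j - 1) * l .. (of_int j + 1) * l} (\<lambda>x. lf_level k B h l (lf_grid k B h l U\<^sub>0 n) n x t))"
    using \<open>0 < l\<close> by (intro chaplygin_region_average lf_level_integrable) auto
  then show ?case
    unfolding t_def by (simp add: algebra_simps)
qed

lemma lf_approx_region:
  assumes U\<^sub>0: "\<And>x. chaplygin_region a b p (U\<^sub>0 x)" and "0 \<le> a" "0 \<le> b" "0 < a + b"
    and coeff: "\<And>t. t \<in> {0..T} \<Longrightarrow> source_coeff_bounded K k B t"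
    and "0 < h" "h * K \<le> 1 / 2" "0 < l" "0 \<le> K" "0 \<le> p"
    and P: "p * exp (2 * K * T) \<le> P" and A: "A = K * (2 + P\<^sup>2)"
    and "t \<in> {0..T}"
  shows "chaplygin_region (a * exp (- A * t)) (b * exp (- A * t)) (p * exp (2 * K * t))
           (lf_approx k B h l U\<^sub>0 x t)"
proof -
  define n where "n = nat \<lfloor>t / h\<rfloor>"
  have "real n = of_int \<lfloor>t / h\<rfloor>"
    unfolding n_def using \<open>t \<in> {0..T}\<close> \<open>0 < h\<close> by simp
  then have "real n \<le> t / h" "t / h < real n + 1"
    by linarith+
  then have "real n * h \<le> t" and "t - real n * h \<le> h"
    using \<open>0 < h\<close> by (simp_all add: field_simps)
  moreover from \<open>t - real n * h \<le> h\<close> have "(t - real n * h) * K \<le> 1 / 2"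
    using \<open>h * K \<le> 1 / 2\<close> \<open>0 \<le> K\<close> by (meson mult_right_mono order_trans)
  moreover from \<open>real n * h \<le> t\<close> have "real n * h \<le> T"
    using \<open>t \<in> {0..T}\<close> by simp
  moreover from \<open>real n * h \<le> T\<close> have "p * exp (2 * K * (real n * h)) \<le> P"
    using P \<open>0 \<le> K\<close> \<open>0 \<le> p\<close> by (smt (verit) exp_le_cancel_iff mult_left_mono)
  ultimately show ?thesis
    unfolding lf_approx_def Let_def n_def[symmetric]
    using lf_grid_region[OF assms(1-12)] assms by (intro lf_level_region[OF _ refl]) auto
qed

lemma lf_approx_bounds:
  assumes coeff: "\<And>t. t \<in> {0..T} \<Longrightarrow> source_coeff_bounded K k B t" and "0 < K"
    and U\<^sub>0: "\<And>x. chaplygin_region a b p (U\<^sub>0 x)" and "0 \<le> a" "0 \<le> b" "0 < a + b" "0 < p"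
  obtains h0 P A where "0 < h0" "0 < P" "0 < A"
    and "\<And>h l x t. 0 < h \<Longrightarrow> h \<le> h0 \<Longrightarrow> 0 < l \<Longrightarrow> t \<in> {0..T} \<Longrightarrow>
      chaplygin_region (a * exp (- A * T)) (b * exp (- A * T)) P (lf_approx k B h l U\<^sub>0 x t)"
proof
  define P A where "P = p * exp (2 * K * T)" and "A = K * (2 + P\<^sup>2)"
  show "0 < 1 / (2 * K)" "0 < P" "0 < A"
    using \<open>0 < K\<close> \<open>0 < p\<close> unfolding P_def A_def by (simp_all add: add_pos_nonneg)
  fix h l x t :: real
  assume "0 < h" "h \<le> 1 / (2 * K)" "0 < l" "t \<in> {0..T}"
  moreover from this have "h * K \<le> 1 / 2"
    using \<open>0 < K\<close> by (simp add: field_simps)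
  ultimately have "chaplygin_region (a * exp (- A * t)) (b * exp (- A * t)) (p * exp (2 * K * t))
      (lf_approx k B h l U\<^sub>0 x t)"
    using \<open>0 < K\<close> \<open>0 < p\<close>
    by (intro lf_approx_region[OF U\<^sub>0 \<open>0 \<le> a\<close> \<open>0 \<le> b\<close> \<open>0 < a + b\<close> coeff _ _ _ _ _ _ A_def])
      (auto simp: P_def)
  moreover have "exp (- A * T) \<le> exp (- A * t)" "p * exp (2 * K * t) \<le> P"
    using \<open>t \<in> {0..T}\<close> \<open>0 < A\<close> \<open>0 < K\<close> \<open>0 < p\<close> unfolding P_def by (auto intro: mult_left_mono)
  ultimately show "chaplygin_region (a * exp (- A * T)) (b * exp (- A * T)) P (lf_approx k B h l U\<^sub>0 x t)"
    unfolding chaplygin_region_def using \<open>0 \<le> a\<close> \<open>0 \<le> b\<close>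
    by (smt (verit) mult_left_mono)
qed

theorem theorem1:
  fixes T \<Lambda> \<delta>0 P0 :: real and k B rho0 m0 :: "real \<Rightarrow> real"
  assumes "T > 0" and "\<Lambda> > 0" and "\<delta>0 > 0" and "P0 > 0"
    and "smooth_fun k" and "smooth_fun B"
    and "\<forall>t\<in>{0..T}. k t > 0 \<and> B t > 0"
    and "\<forall>t\<in>{0..T}. deriv (deriv B) t = (k t)\<^sup>2 * B t"
    and "B T = 1" and "deriv B T = 0"
    and "mono_on {0..T} (\<lambda>t. ln ((B t)\<^sup>2 * k t))"
    and "\<forall>x. rho0 x > 0"
  shows
   "((\<forall>x. \<delta>0 \<le> w_of (rho0 x, m0 x) \<and> w_of (rho0 x, m0 x) \<le> P0 \<and>
          - P0 \<le> z_of (rho0 x, m0 x) \<and> z_of (rho0 x, m0 x) \<le> 0) \<longrightarrow>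
      (\<exists>h0>0. \<exists>P>0. \<exists>A>0. \<forall>h l. 0 < h \<longrightarrow> h \<le> h0 \<longrightarrow> 0 < l \<longrightarrow> l / (2 * h) \<le> \<Lambda> \<longrightarrow>
         (\<forall>x. \<forall>t\<in>{0..T}. max (z_of (lf_approx k B h l (\<lambda>x. (rho0 x, m0 x)) x t))
                                (w_of (lf_approx k B h l (\<lambda>x. (rho0 x, m0 x)) x t)) < l / (2 * h)) \<longrightarrow>
         (\<forall>x. \<forall>t\<in>{0..T}.
            \<delta>0 * exp (- A * T) \<le> w_of (lf_approx k B h l (\<lambda>x. (rho0 x, m0 x)) x t) \<and>
            w_of (lf_approx k B h l (\<lambda>x. (rho0 x, m0 x)) x t) \<le> P \<and>
            - P \<le> z_of (lf_approx k B h l (\<lambda>x. (rho0 x, m0 x)) x t) \<and>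
            z_of (lf_approx k B h l (\<lambda>x. (rho0 x, m0 x)) x t) \<le> 0)))
    \<and>
    ((\<forall>x. 0 \<le> w_of (rho0 x, m0 x) \<and> w_of (rho0 x, m0 x) \<le> P0 \<and>
          - P0 \<le> z_of (rho0 x, m0 x) \<and> z_of (rho0 x, m0 x) \<le> - \<delta>0) \<longrightarrow>
      (\<exists>h0>0. \<exists>P>0. \<exists>A>0. \<forall>h l. 0 < h \<longrightarrow> h \<le> h0 \<longrightarrow> 0 < l \<longrightarrow> l / (2 * h) \<le> \<Lambda> \<longrightarrow>
         (\<forall>x. \<forall>t\<in>{0..T}. max (z_of (lf_approx k B h l (\<lambda>x. (rho0 x, m0 x)) x t))
                                (w_of (lf_approx k B h l (\<lambda>x. (rho0 x, m0 x)) x t)) < l / (2 * h)) \<longrightarrow>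
         (\<forall>x. \<forall>t\<in>{0..T}.
            0 \<le> w_of (lf_approx k B h l (\<lambda>x. (rho0 x, m0 x)) x t) \<and>
            w_of (lf_approx k B h l (\<lambda>x. (rho0 x, m0 x)) x t) \<le> P \<and>
            - P \<le> z_of (lf_approx k B h l (\<lambda>x. (rho0 x, m0 x)) x t) \<and>
            z_of (lf_approx k B h l (\<lambda>x. (rho0 x, m0 x)) x t) \<le> - \<delta>0 * exp (- A * T))))"
proof -
  obtain K where "K > 0" and coeff: "\<And>t. t \<in> {0..T} \<Longrightarrow> source_coeff_bounded K k B t"
    using source_coeff_bounded_exists[OF assms(1,5-8,10,11)] by blast
  let ?U\<^sub>0 = "\<lambda>x. (rho0 x, m0 x)"
  show ?thesis (is "(?H1 \<longrightarrow> ?G1) \<and> (?H2 \<longrightarrow> ?G2)")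
  proof (intro conjI impI)
    assume ?H1
    obtain h0 P A where "0 < h0" "0 < P" "0 < A" and bounds: "\<And>h l x t. 0 < h \<Longrightarrow> h \<le> h0 \<Longrightarrow> 0 < l \<Longrightarrow>
        t \<in> {0..T} \<Longrightarrow> chaplygin_region (\<delta>0 * exp (- A * T)) (0 * exp (- A * T)) P (lf_approx k B h l ?U\<^sub>0 x t)"
      by (rule lf_approx_bounds[where U\<^sub>0 = ?U\<^sub>0 and a = \<delta>0 and b = 0 and p = P0, OF coeff \<open>K > 0\<close>])
        (use \<open>?H1\<close> assms(12) \<open>\<delta>0 > 0\<close> \<open>P0 > 0\<close> in \<open>auto simp: chaplygin_region_def\<close>)
    show ?G1
    proof (intro exI conjI allI impI ballI)
      show "0 < h0" "0 < P" "0 < A" by fact+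
    qed (use bounds in \<open>auto simp: chaplygin_region_def\<close>)
  next
    assume ?H2
    obtain h0 P A where "0 < h0" "0 < P" "0 < A" and bounds: "\<And>h l x t. 0 < h \<Longrightarrow> h \<le> h0 \<Longrightarrow> 0 < l \<Longrightarrow>
        t \<in> {0..T} \<Longrightarrow> chaplygin_region (0 * exp (- A * T)) (\<delta>0 * exp (- A * T)) P (lf_approx k B h l ?U\<^sub>0 x t)"
      by (rule lf_approx_bounds[where U\<^sub>0 = ?U\<^sub>0 and a = 0 and b = \<delta>0 and p = P0, OF coeff \<open>K > 0\<close>])
        (use \<open>?H2\<close> assms(12) \<open>\<delta>0 > 0\<close> \<open>P0 > 0\<close> in \<open>auto simp: chaplygin_region_def\<close>)
    show ?G2
    proof (intro exI conjI allI impI ballI)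
      show "0 < h0" "0 < P" "0 < A" by fact+
    qed (use bounds in \<open>auto simp: chaplygin_region_def\<close>)
  qed
qed

end
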